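(* Let $F\in\mathbb{Q}[x,y]$ be such that $F(\mathbb{R}\times\mathbb{R})=\mathbb{R}$ and $F(\mathbb{Z}\times\mathbb{Z})\supseteq\mathbb{N}$, and suppose the curve $C=\{F(x,y)=0\}\subset\mathbb{A}^2$ is smooth and isomorphic over $\overline{\mathbb{Q}}$ to $\mathbb{A}^1_*$. Let $\phi:\mathbb{P}^1\setminus\{a,b\}\to C$ be an isomorphism. Then the two points $a,b$ (the two places at infinity of $C$) are defined over $\mathbb{R}$.
   Context: $\mathbb{N}$ denotes the set of non-negative integers; $\mathbb{A}^1_*=\mathbb{A}^1\setminus\{0\}$. *)

theory Defs
  imports "HOL-Analysis.Analysis" "HOL-Computational_Algebra.Polynomial"
begin

text \<open>Bivariate polynomials: F in Q[x,y] is represented as an element of (Q[x])[y],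
  i.e. a polynomial in y whose coefficients are polynomials in x.\<close>

definition evalF :: "rat poly poly \<Rightarrow> 'a::field_char_0 \<Rightarrow> 'a \<Rightarrow> 'a" where
  "evalF F x y = poly (map_poly (\<lambda>c. poly (map_poly of_rat c) x) F) y"

definition evalC :: "complex poly poly \<Rightarrow> complex \<Rightarrow> complex \<Rightarrow> complex" where
  "evalC G x y = poly (map_poly (\<lambda>c. poly c x) G) y"

definition dFdx :: "rat poly poly \<Rightarrow> rat poly poly" where
  "dFdx F = map_poly pderiv F"
definition dFdy :: "rat poly poly \<Rightarrow> rat poly poly" where
  "dFdy F = pderiv F"

definition curveC :: "rat poly poly \<Rightarrow> (complex \<times> complex) set" where
  "curveC F = {(x, y). evalF F x y = 0}"

definition smooth_curve :: "rat poly poly \<Rightarrow> bool" where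
  "smooth_curve F \<longleftrightarrow> (\<forall>(x, y) \<in> curveC F. evalF (dFdx F) x y \<noteq> 0 \<or> evalF (dFdy F) x y \<noteq> 0)"

text \<open>Projective line P^1 over C: Some z is the affine point z, None is infinity.\<close>
type_synonym P1 = "complex option"

definition alg_point :: "P1 \<Rightarrow> bool" where
  "alg_point p = (case p of None \<Rightarrow> True | Some z \<Rightarrow> algebraic z)"

definition alg_cpoly :: "complex poly \<Rightarrow> bool" where
  "alg_cpoly p \<longleftrightarrow> (\<forall>i. algebraic (coeff p i))"

definition alg_cpoly2 :: "complex poly poly \<Rightarrow> bool" where
  "alg_cpoly2 G \<longleftrightarrow> (\<forall>i. alg_cpoly (coeff G i))"

definition rf_ok :: "complex poly \<times> complex poly \<Rightarrow> bool" where
  "rf_ok r \<longleftrightarrow> snd r \<noteq> 0 \<and> coprime (fst r) (snd r) \<and> alg_cpoly (fst r) \<and> alg_cpoly (snd r)"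

definition rf_regular :: "complex poly \<times> complex poly \<Rightarrow> P1 \<Rightarrow> bool" where
  "rf_regular r p = (case p of Some z \<Rightarrow> poly (snd r) z \<noteq> 0
                              | None \<Rightarrow> degree (fst r) \<le> degree (snd r))"

definition rf_val :: "complex poly \<times> complex poly \<Rightarrow> P1 \<Rightarrow> complex" where
  "rf_val r p = (case p of Some z \<Rightarrow> poly (fst r) z / poly (snd r) z
                          | None \<Rightarrow> (if degree (fst r) = degree (snd r)
                                     then lead_coeff (fst r) / lead_coeff (snd r) else 0))"

definition proj :: "complex \<Rightarrow> complex \<Rightarrow> P1" where
  "proj u v = (if v = 0 then None else Some (u / v))"

text \<open>phi : P^1 minus {a,b} \<rightarrow> C is an isomorphism of curves defined over the algebraic
  closure of Q: phi is given by rational functions (with algebraic coefficients) regular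
  on P^1 - {a,b}, with values in C, and has an inverse morphism C \<rightarrow> P^1 - {a,b}
  given by [g0 : g1] with g0, g1 polynomials with algebraic coefficients having
  no common zero on C.\<close>
definition is_iso_P1 :: "P1 \<Rightarrow> P1 \<Rightarrow> rat poly poly \<Rightarrow> (P1 \<Rightarrow> complex \<times> complex) \<Rightarrow> bool" where
  "is_iso_P1 a b F \<phi> \<longleftrightarrow> a \<noteq> b \<and> alg_point a \<and> alg_point b \<and>
     (\<exists>r1 r2. rf_ok r1 \<and> rf_ok r2 \<and>
        (\<forall>p \<in> UNIV - {a, b}. rf_regular r1 p \<and> rf_regular r2 p \<and>
                              \<phi> p = (rf_val r1 p, rf_val r2 p))) \<and>
     \<phi> ` (UNIV - {a, b}) \<subseteq> curveC F \<and>
     (\<exists>g0 g1. alg_cpoly2 g0 \<and> alg_cpoly2 g1 \<and>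
        (\<forall>(x, y) \<in> curveC F. (evalC g0 x y \<noteq> 0 \<or> evalC g1 x y \<noteq> 0) \<and>
             proj (evalC g0 x y) (evalC g1 x y) \<in> UNIV - {a, b} \<and>
             \<phi> (proj (evalC g0 x y) (evalC g1 x y)) = (x, y)) \<and>
        (\<forall>p \<in> UNIV - {a, b}. proj (evalC g0 (fst (\<phi> p)) (snd (\<phi> p)))
                                    (evalC g1 (fst (\<phi> p)) (snd (\<phi> p))) = p))"

text \<open>C is isomorphic over the algebraic closure of Q to A^1 minus 0 = P^1 - {0, infinity}.\<close>
definition iso_to_Gm :: "rat poly poly \<Rightarrow> bool" where
  "iso_to_Gm F \<longleftrightarrow> (\<exists>\<psi>. is_iso_P1 (Some 0) None F \<psi>)"

definition P1_at :: "P1 \<Rightarrow> complex filter" where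
  "P1_at p = (case p of Some w \<Rightarrow> at w | None \<Rightarrow> at_infinity)"

definition P1_tendsto :: "('b \<Rightarrow> P1) \<Rightarrow> P1 \<Rightarrow> 'b filter \<Rightarrow> bool" where
  "P1_tendsto f p G = (case p of
      Some w \<Rightarrow> (\<forall>\<^sub>F z in G. f z \<noteq> None) \<and> ((\<lambda>z. the (f z)) \<longlongrightarrow> w) G
    | None \<Rightarrow> (\<forall>\<^sub>F z in G. f z \<noteq> Some 0) \<and>
              ((\<lambda>z. case f z of None \<Rightarrow> 0 | Some v \<Rightarrow> inverse v) \<longlongrightarrow> 0) G)"

text \<open>Complex conjugation on C^2 (it preserves C since F has rational coefficients).\<close>
definition cnj2 :: "complex \<times> complex \<Rightarrow> complex \<times> complex" where
  "cnj2 c = (cnj (fst c), cnj (snd c))"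

text \<open>The real structure of C transported to P^1 - {a,b} via phi.  The place of C
  corresponding to the point a is defined over R iff this antiholomorphic involution
  (which extends to all of P^1) fixes a, i.e. sigma(z) tends to a as z tends to a.\<close>
definition real_place :: "P1 \<Rightarrow> P1 \<Rightarrow> (P1 \<Rightarrow> complex \<times> complex) \<Rightarrow> P1 \<Rightarrow> bool" where
  "real_place a b \<phi> p \<longleftrightarrow>
     P1_tendsto (\<lambda>z. inv_into (UNIV - {a, b}) \<phi> (cnj2 (\<phi> (Some z)))) p (P1_at p)"

end

theory Submission
  imports Defs
begin

text \<open>Complex conjugation of the curve, transported to \<open>P1 - {a, b}\<close> through \<open>\<phi>\<close>, is an
  involution \<open>\<sigma>\<close>. Since \<open>\<phi>\<close> is proper, \<open>\<sigma>\<close> maps punctured neighbourhoods of \<open>a\<close> and \<open>b\<close>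
  close to \<open>{a, b}\<close>, and since these punctured neighbourhoods are connected, \<open>\<sigma>\<close> tends to \<open>a\<close> or
  to \<open>b\<close> at each of the two points; being an involution, it either fixes both or swaps them.
  If it swapped them, the real points of the curve, which are fixed by \<open>\<sigma>\<close>, could accumulate
  neither at \<open>a\<close> nor at \<open>b\<close>, so the real zero set of \<open>F\<close> would be bounded. But a continuous
  surjection \<open>\<real>\<^sup>2 \<rightarrow> \<real>\<close> has an unbounded zero set: outside a large disc it would have constant
  sign and hence be bounded on one side.\<close>

section \<open>The Riemann sphere\<close>

text \<open>Inverse stereographic projection in homogeneous coordinates: \<open>P1_sphere\<close> embeds \<open>P1\<close> as the
  unit sphere of \<open>\<complex> \<times> \<real>\<close>, with \<open>None\<close> at the north pole \<open>(0, 1)\<close>; this gives \<open>P1\<close> its metric.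
  \<open>sphere_affine\<close> and \<open>sphere_affine_at_infinity\<close> recover the coordinates \<open>z\<close> and \<open>1/z\<close>.\<close>
definition hom_sphere :: "complex \<Rightarrow> complex \<Rightarrow> complex \<times> real" where
  "hom_sphere u v = (2 * u * cnj v / complex_of_real ((cmod u)\<^sup>2 + (cmod v)\<^sup>2),
                     ((cmod u)\<^sup>2 - (cmod v)\<^sup>2) / ((cmod u)\<^sup>2 + (cmod v)\<^sup>2))"

definition P1_sphere :: "P1 \<Rightarrow> complex \<times> real" where
  "P1_sphere q = (case q of None \<Rightarrow> (0, 1) | Some z \<Rightarrow> hom_sphere z 1)"

definition sphere_affine :: "complex \<times> real \<Rightarrow> complex" where
  "sphere_affine s = fst s / complex_of_real (1 - snd s)"

definition sphere_affine_at_infinity :: "complex \<times> real \<Rightarrow> complex" where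
  "sphere_affine_at_infinity s = cnj (fst s / complex_of_real (1 + snd s))"

lemma hom_sphere_scale:
  assumes "c \<noteq> 0"
  shows "hom_sphere (c * u) (c * v) = hom_sphere u v"
proof -
  define k where "k = (cmod c)\<^sup>2"
  have k: "k \<noteq> 0" "complex_of_real k \<noteq> 0" using assms by (simp_all add: k_def)
  have norms: "(cmod (c * u))\<^sup>2 + (cmod (c * v))\<^sup>2 = k * ((cmod u)\<^sup>2 + (cmod v)\<^sup>2)"
              "(cmod (c * u))\<^sup>2 - (cmod (c * v))\<^sup>2 = k * ((cmod u)\<^sup>2 - (cmod v)\<^sup>2)"
    by (simp_all add: k_def norm_mult power_mult_distrib algebra_simps)
  have "c * cnj c = complex_of_real k" using complex_norm_square[of c] by (simp add: k_def)
  then have numerator: "2 * (c * u) * cnj (c * v) = complex_of_real k * (2 * u * cnj v)"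
    by (simp flip: \<open>c * cnj c = _\<close> add: algebra_simps)
  show ?thesis unfolding hom_sphere_def norms numerator of_real_mult
    using mult_divide_mult_cancel_left[OF k(2)] mult_divide_mult_cancel_left[OF k(1)] by simp
qed

lemma hom_sphere_infinity: "u \<noteq> 0 \<Longrightarrow> hom_sphere u 0 = (0, 1)"
  by (simp add: hom_sphere_def)

lemma P1_sphere_proj:
  assumes "(u, v) \<noteq> (0, 0)"
  shows "P1_sphere (proj u v) = hom_sphere u v"
proof (cases "v = 0")
  case True
  then show ?thesis using assms by (simp add: proj_def P1_sphere_def hom_sphere_infinity)
next
  case False
  then have "P1_sphere (proj u v) = hom_sphere (u / v) 1"
    by (simp add: proj_def P1_sphere_def)
  also have "\<dots> = hom_sphere (v * (u / v)) (v * 1)"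
    using False by (rule hom_sphere_scale[symmetric])
  finally show ?thesis using False by simp
qed

lemma P1_sphere_None: "P1_sphere None = (0, 1)"
  by (simp add: P1_sphere_def)

lemma P1_sphere_Some:
  "P1_sphere (Some z) = (2 * z / complex_of_real ((cmod z)\<^sup>2 + 1), ((cmod z)\<^sup>2 - 1) / ((cmod z)\<^sup>2 + 1))"
  by (simp add: P1_sphere_def hom_sphere_def)

lemma snd_P1_sphere_Some_less: "snd (P1_sphere (Some z)) < 1"
proof -
  have "(cmod z)\<^sup>2 + 1 > 0" using zero_le_power2[of "cmod z"] by linarith
  then show ?thesis by (simp add: P1_sphere_Some divide_less_eq)
qed

lemma snd_P1_sphere_eq_1_iff: "snd (P1_sphere q) = 1 \<longleftrightarrow> q = None"
  by (metis P1_sphere_None less_irrefl not_None_eq snd_P1_sphere_Some_less snd_conv)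

lemma sphere_affine_P1_sphere: "sphere_affine (P1_sphere (Some z)) = z"
proof -
  define n where "n = (cmod z)\<^sup>2"
  have n: "n + 1 > 0" using zero_le_power2[of "cmod z"] unfolding n_def by linarith
  define c where "c = complex_of_real (n + 1)"
  have c: "c \<noteq> 0" using n unfolding c_def by (simp only: of_real_eq_0_iff; simp)
  have "1 - (n - 1) / (n + 1) = 2 / (n + 1)" using n by (simp add: field_simps)
  then have "sphere_affine (P1_sphere (Some z)) = (2 * z / c) / complex_of_real (2 / (n + 1))"
    unfolding sphere_affine_def P1_sphere_Some n_def[symmetric] c_def by simp
  also have "complex_of_real (2 / (n + 1)) = 2 / c"
    unfolding c_def by (simp only: of_real_divide; simp)
  finally show ?thesis using c by simp
qed

lemma sphere_affine_at_infinity_P1_sphere: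
  "sphere_affine_at_infinity (P1_sphere q) = (case q of None \<Rightarrow> 0 | Some v \<Rightarrow> inverse v)"
proof (cases "q = None \<or> q = Some 0")
  case True
  then show ?thesis by (auto simp: sphere_affine_at_infinity_def P1_sphere_None P1_sphere_Some)
next
  case False
  then obtain z where q: "q = Some z" and "z \<noteq> 0" by auto
  define n where "n = (cmod z)\<^sup>2"
  have n: "n > 0" "complex_of_real n \<noteq> 0" using \<open>z \<noteq> 0\<close> by (simp_all add: n_def)
  define c where "c = complex_of_real (n + 1)"
  have c: "c \<noteq> 0" using n unfolding c_def by (simp only: of_real_eq_0_iff; simp)
  have "1 + (n - 1) / (n + 1) = 2 * n / (n + 1)" using n by (simp add: field_simps)
  then have "sphere_affine_at_infinity (P1_sphere q)
               = cnj ((2 * z / c) / complex_of_real (2 * n / (n + 1)))"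
    unfolding sphere_affine_at_infinity_def q P1_sphere_Some n_def[symmetric] c_def by simp
  also have "complex_of_real (2 * n / (n + 1)) = 2 * complex_of_real n / c"
    unfolding c_def by (simp only: of_real_divide of_real_mult; simp)
  also have "cnj ((2 * z / c) / (2 * complex_of_real n / c)) = cnj z / complex_of_real n"
    using c n by simp
  also have "\<dots> = inverse z"
    using complex_norm_square[of z] n \<open>z \<noteq> 0\<close> by (simp add: n_def field_simps)
  finally show ?thesis using q by simp
qed

lemma inj_P1_sphere: "inj P1_sphere"
proof (rule injI)
  fix p q assume eq: "P1_sphere p = P1_sphere q"
  then have "p = None \<longleftrightarrow> q = None" by (metis snd_P1_sphere_eq_1_iff)
  with eq show "p = q" by (metis option.exhaust sphere_affine_P1_sphere)
qed

lemma isCont_sphere_affine: "isCont sphere_affine (P1_sphere (Some w))"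
  using snd_P1_sphere_Some_less[of w] unfolding sphere_affine_def
  by (intro continuous_intros) auto

lemma isCont_sphere_affine_at_infinity: "isCont sphere_affine_at_infinity (P1_sphere None)"
  unfolding sphere_affine_at_infinity_def by (intro continuous_intros) (simp add: P1_sphere_None)

lemma dist_P1_sphere_zero_infinity: "dist (P1_sphere (Some 0)) (P1_sphere None) = 2"
  by (simp add: P1_sphere_Some P1_sphere_None dist_Pair_Pair dist_real_def)

lemma tendsto_hom_sphere:
  assumes "(u \<longlongrightarrow> u0) G" "(v \<longlongrightarrow> v0) G" "(u0, v0) \<noteq> (0, 0)"
  shows "((\<lambda>x. hom_sphere (u x) (v x)) \<longlongrightarrow> hom_sphere u0 v0) G"
proof -
  have "(cmod u0)\<^sup>2 + (cmod v0)\<^sup>2 \<noteq> 0" using assms(3) by (simp add: add_nonneg_eq_0_iff)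
  then show ?thesis unfolding hom_sphere_def
    by (intro tendsto_intros assms(1,2)) (auto simp del: of_real_add of_real_power)
qed

lemma continuous_on_hom_sphere:
  assumes "continuous_on S u" "continuous_on S v" "\<And>x. x \<in> S \<Longrightarrow> (u x, v x) \<noteq> (0, 0)"
  shows "continuous_on S (\<lambda>x. hom_sphere (u x) (v x))"
  using assms unfolding continuous_on_def by (blast intro: tendsto_hom_sphere)

lemma range_P1_sphere:
  "range P1_sphere = (\<lambda>z. hom_sphere z 1) ` cball 0 1 \<union> (\<lambda>w. hom_sphere 1 w) ` cball 0 1"
proof (intro equalityI subsetI)
  fix s assume "s \<in> range P1_sphere"
  then obtain q where s: "s = P1_sphere q" by auto
  show "s \<in> (\<lambda>z. hom_sphere z 1) ` cball 0 1 \<union> (\<lambda>w. hom_sphere 1 w) ` cball 0 1"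
  proof (cases q)
    case None
    then have "s = hom_sphere 1 0" using s by (simp add: P1_sphere_None hom_sphere_infinity)
    then show ?thesis by auto
  next
    case (Some z)
    show ?thesis
    proof (cases "cmod z \<le> 1")
      case True
      then show ?thesis using s Some by (auto simp: P1_sphere_def)
    next
      case False
      then have "z \<noteq> 0" by auto
      then have "hom_sphere z 1 = hom_sphere (inverse z * z) (inverse z * 1)"
        by (intro hom_sphere_scale[symmetric]) simp
      then have "s = hom_sphere 1 (inverse z)"
        using s Some \<open>z \<noteq> 0\<close> by (simp add: P1_sphere_def)
      moreover have "inverse z \<in> cball 0 1"
        using False by (auto simp: norm_inverse inverse_le_1_iff)
      ultimately show ?thesis using False by auto
    qed
  qed
next
  fix s assume "s \<in> (\<lambda>z. hom_sphere z 1) ` cball 0 1 \<union> (\<lambda>w. hom_sphere 1 w) ` cball 0 1"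
  then show "s \<in> range P1_sphere"
  proof
    assume "s \<in> (\<lambda>z. hom_sphere z 1) ` cball 0 1"
    then show ?thesis by (auto simp: P1_sphere_def intro: range_eqI[of _ _ "Some _"])
  next
    assume "s \<in> (\<lambda>w. hom_sphere 1 w) ` cball 0 1"
    then show ?thesis by (auto simp flip: P1_sphere_proj)
  qed
qed

lemma compact_range_P1_sphere: "compact (range P1_sphere)"
  unfolding range_P1_sphere
  by (intro compact_Un compact_continuous_image continuous_on_hom_sphere continuous_intros) auto

section \<open>Neighbourhoods in \<open>P1\<close>\<close>

lemma P1_at_neq_bot: "P1_at p \<noteq> bot"
  by (cases p) (auto simp: P1_at_def trivial_limit_at_infinity)

lemma tendsto_P1_sphere_P1_at: "((\<lambda>z. P1_sphere (Some z)) \<longlongrightarrow> P1_sphere p) (P1_at p)"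
proof (cases p)
  case (Some w)
  have "((\<lambda>z. hom_sphere z 1) \<longlongrightarrow> hom_sphere w 1) (at w)"
    by (intro tendsto_hom_sphere tendsto_intros) auto
  then show ?thesis using Some by (simp add: P1_at_def P1_sphere_def)
next
  case None
  have "eventually (\<lambda>z. hom_sphere 1 (inverse z) = P1_sphere (Some z)) at_infinity"
  proof (rule eventually_at_infinityI[of 1])
    fix z :: complex assume "1 \<le> norm z"
    then have "proj 1 (inverse z) = Some z" by (auto simp: proj_def divide_inverse)
    then show "hom_sphere 1 (inverse z) = P1_sphere (Some z)" using P1_sphere_proj[of 1 "inverse z"] by simp
  qed
  moreover have "((\<lambda>z. hom_sphere 1 (inverse z)) \<longlongrightarrow> hom_sphere 1 0) at_infinity"
    by (intro tendsto_hom_sphere tendsto_inverse_0 tendsto_intros) auto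
  ultimately have "((\<lambda>z. P1_sphere (Some z)) \<longlongrightarrow> hom_sphere 1 0) at_infinity"
    by (rule Lim_transform_eventually[rotated])
  then show ?thesis using None by (simp add: P1_at_def P1_sphere_None hom_sphere_infinity)
qed

lemma eventually_P1_at_neq: "eventually (\<lambda>z. Some z \<noteq> q) (P1_at p)"
proof (cases q)
  case (Some w)
  show ?thesis
  proof (cases p)
    case None
    have "eventually (\<lambda>z::complex. norm z \<ge> norm w + 1) at_infinity"
      by (auto simp: eventually_at_infinity)
    then show ?thesis using None Some unfolding P1_at_def by (auto elim!: eventually_mono)
  qed (use Some eventually_neq_at_within[of w] in \<open>simp add: P1_at_def\<close>)
qed simp

lemma eventually_P1_at_connected:
  assumes "eventually P (P1_at p)"
  obtains N where "connected N" "\<forall>z\<in>N. P z" "eventually (\<lambda>z. z \<in> N) (P1_at p)"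
proof (cases p)
  case (Some w)
  then obtain r where r: "r > 0" "\<And>z. z \<noteq> w \<Longrightarrow> dist z w < r \<Longrightarrow> P z"
    using assms by (auto simp: P1_at_def eventually_at)
  show ?thesis
  proof (rule that)
    show "connected (ball w r - {w})" by (rule connected_punctured_ball) simp
    show "\<forall>z\<in>ball w r - {w}. P z" using r by (auto simp: dist_commute)
    show "eventually (\<lambda>z. z \<in> ball w r - {w}) (P1_at p)"
      using Some r(1) by (auto simp: P1_at_def eventually_at dist_commute)
  qed
next
  case None
  then obtain R where R: "\<And>z. R \<le> norm z \<Longrightarrow> P z"
    using assms by (auto simp: P1_at_def eventually_at_infinity)
  show ?thesis
  proof (rule that)
    show "connected (- cball (0::complex) \<bar>R\<bar>)"
      by (rule connected_complement_bounded_convex) auto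
    show "\<forall>z\<in>- cball 0 \<bar>R\<bar>. P z" using R by auto
    have "eventually (\<lambda>z. z \<in> - cball (0::complex) \<bar>R\<bar>) at_infinity"
      unfolding eventually_at_infinity by (intro exI[of _ "\<bar>R\<bar> + 1"]) auto
    then show "eventually (\<lambda>z. z \<in> - cball 0 \<bar>R\<bar>) (P1_at p)"
      using None by (simp add: P1_at_def)
  qed
qed

lemma P1_sphere_near_Some_neq_None:
  assumes "dist (P1_sphere q) (P1_sphere (Some w)) < 1 - snd (P1_sphere (Some w))"
  shows "q \<noteq> None"
proof
  assume "q = None"
  then have "dist (snd (P1_sphere q)) (snd (P1_sphere (Some w))) = 1 - snd (P1_sphere (Some w))"
    using snd_P1_sphere_Some_less[of w] by (simp add: P1_sphere_None dist_real_def)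
  then show False using assms dist_snd_le[of "P1_sphere q" "P1_sphere (Some w)"] by simp
qed

lemma norm_gt_if_P1_sphere_near_None:
  assumes "dist (P1_sphere (Some z)) (P1_sphere None) < 2 / (R\<^sup>2 + 1)"
  shows "\<bar>R\<bar> < cmod z"
proof -
  define n where "n = (cmod z)\<^sup>2"
  have n: "n + 1 > 0" using zero_le_power2[of "cmod z"] unfolding n_def by linarith
  have "dist (snd (P1_sphere (Some z))) (snd (P1_sphere None)) < 2 / (R\<^sup>2 + 1)"
    using dist_snd_le[of "P1_sphere (Some z)" "P1_sphere None"] assms by simp
  then have "1 - (n - 1) / (n + 1) < 2 / (R\<^sup>2 + 1)"
    by (simp add: P1_sphere_Some P1_sphere_None n_def dist_real_def)
  moreover have "1 - (n - 1) / (n + 1) = 2 / (n + 1)" using n by (simp add: field_simps)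
  ultimately have "R\<^sup>2 < (cmod z)\<^sup>2"
    using n unfolding n_def by (smt (verit, best) frac_le zero_le_power2)
  then show ?thesis by (simp add: power2_less_imp_less abs_le_iff)
qed

lemma eventually_P1_at_sphere_nbhd:
  assumes "eventually P (P1_at p)"
  obtains d where "d > 0" "\<And>q. dist (P1_sphere q) (P1_sphere p) < d \<Longrightarrow> q \<noteq> p \<Longrightarrow> \<exists>z. q = Some z \<and> P z"
proof (cases p)
  case (Some w)
  then obtain r where r: "r > 0" "\<And>z. z \<noteq> w \<Longrightarrow> dist z w < r \<Longrightarrow> P z"
    using assms by (auto simp: P1_at_def eventually_at)
  from isCont_sphere_affine[of w] obtain d1 where d1: "d1 > 0"
    "\<And>s. dist s (P1_sphere p) < d1 \<Longrightarrow> dist (sphere_affine s) (sphere_affine (P1_sphere p)) < r"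
    using r(1) Some unfolding continuous_at_eps_delta by blast
  define d where "d = min d1 (1 - snd (P1_sphere p))"
  show ?thesis
  proof (rule that)
    show "d > 0" using d1 Some snd_P1_sphere_Some_less[of w] by (simp add: d_def)
  next
    fix q assume q: "dist (P1_sphere q) (P1_sphere p) < d" "q \<noteq> p"
    then obtain z where z: "q = Some z"
      using P1_sphere_near_Some_neq_None[of q w] Some by (auto simp: d_def)
    have "dist z w < r" using d1(2)[of "P1_sphere q"] q z Some by (simp add: d_def sphere_affine_P1_sphere)
    then show "\<exists>z. q = Some z \<and> P z" using z q(2) Some r(2) by auto
  qed
next
  case None
  then obtain R where R: "\<And>z. R \<le> norm z \<Longrightarrow> P z"
    using assms by (auto simp: P1_at_def eventually_at_infinity)
  define d where "d = 2 / (R\<^sup>2 + 1)"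
  show ?thesis
  proof (rule that)
    show "d > 0" unfolding d_def by (simp add: add_nonneg_pos)
  next
    fix q assume q: "dist (P1_sphere q) (P1_sphere p) < d" "q \<noteq> p"
    then obtain z where z: "q = Some z" using None by (cases q) auto
    then have "\<bar>R\<bar> < cmod z"
      using q None by (intro norm_gt_if_P1_sphere_near_None) (simp add: d_def)
    then show "\<exists>z. q = Some z \<and> P z" using z R by auto
  qed
qed

lemma P1_tendsto_if_sphere_tendsto:
  assumes lim: "((\<lambda>x. P1_sphere (f x)) \<longlongrightarrow> P1_sphere p) G"
  shows "P1_tendsto f p G"
proof (cases p)
  case (Some w)
  have gap: "1 - snd (P1_sphere p) > 0" using Some snd_P1_sphere_Some_less[of w] by simp
  have finite: "eventually (\<lambda>x. f x \<noteq> None \<and> sphere_affine (P1_sphere (f x)) = the (f x)) G"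
    using tendstoD[OF lim gap]
  proof (rule eventually_mono)
    fix x assume "dist (P1_sphere (f x)) (P1_sphere p) < 1 - snd (P1_sphere p)"
    then obtain z where "f x = Some z" using P1_sphere_near_Some_neq_None[of "f x" w] Some by auto
    then show "f x \<noteq> None \<and> sphere_affine (P1_sphere (f x)) = the (f x)"
      by (simp add: sphere_affine_P1_sphere)
  qed
  from isCont_tendsto_compose[OF isCont_sphere_affine lim[unfolded Some]]
  have "((\<lambda>x. sphere_affine (P1_sphere (f x))) \<longlongrightarrow> w) G"
    using Some by (simp add: sphere_affine_P1_sphere)
  then have "((\<lambda>x. the (f x)) \<longlongrightarrow> w) G"
    by (rule Lim_transform_eventually) (use finite in \<open>auto elim: eventually_mono\<close>)
  then show ?thesis using Some finite unfolding P1_tendsto_def by (auto elim: eventually_mono)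
next
  case None
  have two: "(2::real) > 0" by simp
  have not_zero: "eventually (\<lambda>x. f x \<noteq> Some 0) G"
    using tendstoD[OF lim two]
  proof (rule eventually_mono)
    fix x assume "dist (P1_sphere (f x)) (P1_sphere p) < 2"
    then show "f x \<noteq> Some 0" using None dist_P1_sphere_zero_infinity by auto
  qed
  from isCont_tendsto_compose[OF isCont_sphere_affine_at_infinity lim[unfolded None]]
  have "((\<lambda>x. case f x of None \<Rightarrow> 0 | Some v \<Rightarrow> inverse v) \<longlongrightarrow> 0) G"
    using None by (simp add: sphere_affine_at_infinity_P1_sphere)
  then show ?thesis using None not_zero unfolding P1_tendsto_def by auto
qed

section \<open>Polynomials and rational functions\<close>

lemma poly_eq_sum_atMost:
  "degree (p :: 'a::comm_semiring_1 poly) \<le> n \<Longrightarrow> poly p x = (\<Sum>i\<le>n. coeff p i * x ^ i)"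
  unfolding poly_altdef by (rule sum.mono_neutral_left) (auto simp: coeff_eq_0)

lemma evalF_eq_sum:
  "evalF F x y = (\<Sum>i\<le>degree F. (\<Sum>j\<le>degree (coeff F i). of_rat (coeff (coeff F i) j) * x ^ j) * y ^ i)"
  unfolding evalF_def
  by (simp add: poly_eq_sum_atMost[OF map_poly_degree_leq] coeff_map_poly)

lemma evalC_eq_sum: "evalC G x y = (\<Sum>i\<le>degree G. poly (coeff G i) x * y ^ i)"
  unfolding evalC_def by (simp add: poly_eq_sum_atMost[OF map_poly_degree_leq] coeff_map_poly)

lemma continuous_on_evalF [continuous_intros]:
  fixes f g :: "'b::topological_space \<Rightarrow> 'a::{real_normed_field, field_char_0}"
  assumes "continuous_on S f" "continuous_on S g"
  shows "continuous_on S (\<lambda>z. evalF F (f z) (g z))"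
  unfolding evalF_eq_sum by (intro continuous_intros assms)

lemma continuous_on_evalC [continuous_intros]:
  assumes "continuous_on S f" "continuous_on S g"
  shows "continuous_on S (\<lambda>z. evalC G (f z) (g z))"
  unfolding evalC_eq_sum by (intro continuous_intros assms)

lemma cnj_of_rat [simp]: "cnj (of_rat r) = of_rat r"
  by (cases r) (simp add: of_rat_rat)

lemma of_real_of_rat [simp]: "complex_of_real (of_rat r) = of_rat r"
  by (cases r) (simp add: of_rat_rat of_real_divide)

lemma cnj_evalF: "cnj (evalF F x y) = evalF F (cnj x) (cnj y)"
  by (simp add: evalF_eq_sum)

lemma of_real_evalF: "complex_of_real (evalF F x y) = evalF F (complex_of_real x) (complex_of_real y)"
  by (simp add: evalF_eq_sum)

lemma closed_curveC: "closed (curveC F)"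
proof -
  have "curveC F = {c. evalF F (fst c) (snd c) = 0}" by (auto simp: curveC_def)
  then show ?thesis
    by (simp add: closed_Collect_eq continuous_on_evalF continuous_on_fst continuous_on_snd continuous_on_id)
qed

lemma cnj2_in_curveC: "c \<in> curveC F \<Longrightarrow> cnj2 c \<in> curveC F"
  using cnj_evalF[of F "fst c" "snd c"] by (cases c) (auto simp: curveC_def cnj2_def)

lemma norm_cnj2 [simp]: "norm (cnj2 c) = norm c"
  by (cases c) (simp add: cnj2_def norm_Pair)

lemma cnj2_cnj2 [simp]: "cnj2 (cnj2 c) = c"
  by (simp add: cnj2_def)

lemma rational_function_convergent_at_infinity:
  fixes p q :: "'a::real_normed_field poly"
  assumes "q \<noteq> 0" "degree p \<le> degree q"
  shows "\<exists>L. ((\<lambda>z. poly p z / poly q z) \<longlongrightarrow> L) at_infinity"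
proof (cases "degree p = degree q")
  case True
  have "((\<lambda>z. (poly p z / z ^ degree p) / (poly q z / z ^ degree q))
          \<longlongrightarrow> lead_coeff p / lead_coeff q) at_infinity"
    using assms(1) by (intro tendsto_divide poly_divide_tendsto_aux) simp
  moreover have "eventually (\<lambda>z. (poly p z / z ^ degree p) / (poly q z / z ^ degree q)
                                  = poly p z / poly q z) at_infinity"
    by (rule eventually_at_infinityI[of 1]) (auto simp: True)
  ultimately show ?thesis by (blast intro: Lim_transform_eventually)
next
  case False
  then show ?thesis using assms(2) poly_divide_tendsto_0_at_infinity[of p q] by auto
qed

section \<open>General topology\<close>

lemma connected_nonzero_constant_sign:
  fixes f :: "'a::topological_space \<Rightarrow> real"
  assumes "connected S" "continuous_on S f" "\<And>v. v \<in> S \<Longrightarrow> f v \<noteq> 0"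
  shows "(\<forall>v\<in>S. f v > 0) \<or> (\<forall>v\<in>S. f v < 0)"
proof -
  have "connected (f ` S)" using assms(2,1) by (rule connected_continuous_image)
  moreover have "f ` S \<subseteq> {0<..} \<union> {..<0}" using assms(3) by (auto simp: neq_iff)
  ultimately have "{0<..} \<inter> f ` S = {} \<or> {..<0} \<inter> f ` S = {}" by (intro connectedD) auto
  then show ?thesis using \<open>f ` S \<subseteq> _\<close> by blast
qed

lemma zero_set_unbounded_if_surj:
  fixes f :: "'a::euclidean_space \<Rightarrow> real"
  assumes "2 \<le> DIM('a)" "continuous_on UNIV f" "surj f"
  shows "\<not> bounded {v. f v = 0}"
proof
  assume "bounded {v. f v = 0}"
  then obtain R where R: "\<And>v. f v = 0 \<Longrightarrow> norm v \<le> R" by (auto simp: bounded_iff)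
  obtain B where B: "B > 0" "\<And>v. v \<in> cball 0 R \<Longrightarrow> \<bar>f v\<bar> \<le> B"
  proof -
    have "compact (f ` cball 0 R)"
      using assms(2) by (intro compact_continuous_image) (auto intro: continuous_on_subset)
    then show ?thesis using that by (force dest: compact_imp_bounded simp: bounded_pos)
  qed
  have "(\<forall>v\<in>- cball 0 R. f v > 0) \<or> (\<forall>v\<in>- cball 0 R. f v < 0)"
    using assms(1,2) R
    by (intro connected_nonzero_constant_sign connected_complement_bounded_convex)
       (auto intro: continuous_on_subset)
  then have "(\<forall>v. f v > - B - 1) \<or> (\<forall>v. f v < B + 1)"
  proof (elim disjE)
    assume pos: "\<forall>v\<in>- cball 0 R. f v > 0"
    have "f v > - B - 1" for v
      using B(1) B(2)[of v] pos[rule_format, of v] by (cases "v \<in> cball 0 R") auto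
    then show ?thesis by blast
  next
    assume neg: "\<forall>v\<in>- cball 0 R. f v < 0"
    have "f v < B + 1" for v
      using B(1) B(2)[of v] neg[rule_format, of v] by (cases "v \<in> cball 0 R") auto
    then show ?thesis by blast
  qed
  moreover obtain u v where "f u = - B - 1" "f v = B + 1" using assms(3) by (metis surjD)
  ultimately show False by (metis less_irrefl)
qed

lemma tendsto_if_eventually_closer_to_one:
  fixes h :: "'a \<Rightarrow> 'b::metric_space"
  assumes near: "\<And>e. e > 0 \<Longrightarrow> eventually (\<lambda>z. dist (h z) X < e \<or> dist (h z) Y < e) G"
    and closer: "eventually (\<lambda>z. dist (h z) X < e0) G" and "e0 > 0" and gap: "2 * e0 \<le> dist X Y"
  shows "(h \<longlongrightarrow> X) G"
proof (rule tendstoI)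
  fix e :: real assume "e > 0"
  then have "eventually (\<lambda>z. dist (h z) X < min e e0 \<or> dist (h z) Y < min e e0) G"
    using near[of "min e e0"] \<open>e0 > 0\<close> by simp
  then show "eventually (\<lambda>z. dist (h z) X < e) G"
    using closer
  proof eventually_elim
    case (elim z)
    then show ?case using gap dist_triangle[of X Y "h z"] by (auto simp: dist_commute)
  qed
qed

lemma tendsto_one_of_two_points:
  fixes h :: "'a::topological_space \<Rightarrow> 'b::metric_space"
  assumes "A \<noteq> B"
    and near: "\<And>e. e > 0 \<Longrightarrow> eventually (\<lambda>z. dist (h z) A < e \<or> dist (h z) B < e) G"
    and connected_nbhds: "\<And>P. eventually P G \<Longrightarrow>
           \<exists>N. connected N \<and> (\<forall>z\<in>N. P z) \<and> eventually (\<lambda>z. z \<in> N) G"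
    and cont: "continuous_on S h" "eventually (\<lambda>z. z \<in> S) G"
  shows "(h \<longlongrightarrow> A) G \<or> (h \<longlongrightarrow> B) G"
proof -
  define e0 where "e0 = dist A B / 3"
  have e0: "e0 > 0" and gap: "2 * e0 \<le> dist A B" using assms(1) by (simp_all add: e0_def)
  obtain N where N: "connected N" "eventually (\<lambda>z. z \<in> N) G"
    and N_near: "\<forall>z\<in>N. z \<in> S \<and> (dist (h z) A < e0 \<or> dist (h z) B < e0)"
    using connected_nbhds[OF eventually_conj[OF cont(2) near[OF e0]]] by blast
  have "connected (h ` N)"
    using N(1) N_near by (intro connected_continuous_image continuous_on_subset[OF cont(1)]) auto
  moreover have "h ` N \<subseteq> ball A e0 \<union> ball B e0"
    using N_near by (auto simp: dist_commute)
  moreover have "ball A e0 \<inter> ball B e0 = {}"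
  proof -
    have "\<not> (dist A y < e0 \<and> dist y B < e0)" for y using dist_triangle[of A B y] gap by auto
    then show ?thesis by (auto simp: dist_commute)
  qed
  ultimately have "ball A e0 \<inter> h ` N = {} \<or> ball B e0 \<inter> h ` N = {}"
    by (intro connectedD) auto
  with \<open>h ` N \<subseteq> _\<close> have "h ` N \<subseteq> ball A e0 \<or> h ` N \<subseteq> ball B e0"
    by blast
  moreover have "eventually (\<lambda>z. dist (h z) X < e0) G" if "h ` N \<subseteq> ball X e0" for X
    using N(2) by (rule eventually_mono) (use that in \<open>auto simp: dist_commute\<close>)
  ultimately have "eventually (\<lambda>z. dist (h z) A < e0) G \<or> eventually (\<lambda>z. dist (h z) B < e0) G"
    by blast
  then show ?thesis
    using tendsto_if_eventually_closer_to_one[of h A B G e0] near e0 gap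
          tendsto_if_eventually_closer_to_one[of h B A G e0]
    by (auto simp: disj_commute dist_commute)
qed

section \<open>The real structure transported to \<open>P1 - {a, b}\<close>\<close>

locale P1_curve_iso =
  fixes F :: "rat poly poly" and a b :: P1 and \<phi> :: "P1 \<Rightarrow> complex \<times> complex"
    and r1 r2 :: "complex poly \<times> complex poly" and g0 g1 :: "complex poly poly"
  assumes a_neq_b: "a \<noteq> b"
    and denominators_nonzero: "snd r1 \<noteq> 0" "snd r2 \<noteq> 0"
    and phi_rational: "\<And>p. p \<notin> {a, b} \<Longrightarrow>
           rf_regular r1 p \<and> rf_regular r2 p \<and> \<phi> p = (rf_val r1 p, rf_val r2 p)"
    and phi_in_curve: "\<And>p. p \<notin> {a, b} \<Longrightarrow> \<phi> p \<in> curveC F"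
    and inverse_on_curve: "\<And>x y. (x, y) \<in> curveC F \<Longrightarrow>
           (evalC g0 x y \<noteq> 0 \<or> evalC g1 x y \<noteq> 0) \<and>
           proj (evalC g0 x y) (evalC g1 x y) \<notin> {a, b} \<and>
           \<phi> (proj (evalC g0 x y) (evalC g1 x y)) = (x, y)"
    and inverse_on_P1: "\<And>p. p \<notin> {a, b} \<Longrightarrow>
           proj (evalC g0 (fst (\<phi> p)) (snd (\<phi> p))) (evalC g1 (fst (\<phi> p)) (snd (\<phi> p))) = p"
begin

definition psi :: "complex \<times> complex \<Rightarrow> P1" where
  "psi c = proj (evalC g0 (fst c) (snd c)) (evalC g1 (fst c) (snd c))"

definition sigma :: "P1 \<Rightarrow> P1" where
  "sigma p = psi (cnj2 (\<phi> p))"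

definition phi_affine :: "complex \<Rightarrow> complex \<times> complex" where
  "phi_affine z = (poly (fst r1) z / poly (snd r1) z, poly (fst r2) z / poly (snd r2) z)"

abbreviation sigma_sphere :: "complex \<Rightarrow> complex \<times> real" where
  "sigma_sphere z \<equiv> P1_sphere (sigma (Some z))"

lemma psi_notin: "c \<in> curveC F \<Longrightarrow> psi c \<notin> {a, b}"
  using inverse_on_curve[of "fst c" "snd c"] by (simp add: psi_def)

lemma phi_psi: "c \<in> curveC F \<Longrightarrow> \<phi> (psi c) = c"
  using inverse_on_curve[of "fst c" "snd c"] by (simp add: psi_def)

lemma psi_phi: "p \<notin> {a, b} \<Longrightarrow> psi (\<phi> p) = p"
  using inverse_on_P1 by (simp add: psi_def)

lemma continuous_on_P1_sphere_psi: "continuous_on (curveC F) (\<lambda>c. P1_sphere (psi c))"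
proof -
  have "continuous_on (curveC F) (\<lambda>c. hom_sphere (evalC g0 (fst c) (snd c)) (evalC g1 (fst c) (snd c)))"
    by (intro continuous_on_hom_sphere continuous_intros)
       (use inverse_on_curve in \<open>auto simp: case_prod_beta\<close>)
  moreover have "P1_sphere (psi c) = hom_sphere (evalC g0 (fst c) (snd c)) (evalC g1 (fst c) (snd c))"
    if "c \<in> curveC F" for c
    using inverse_on_curve[of "fst c" "snd c"] that unfolding psi_def by (intro P1_sphere_proj) auto
  ultimately show ?thesis by (simp cong: continuous_on_cong)
qed

lemma phi_Some:
  "Some z \<notin> {a, b} \<Longrightarrow> \<phi> (Some z) = phi_affine z \<and> poly (snd r1) z \<noteq> 0 \<and> poly (snd r2) z \<noteq> 0"
  using phi_rational[of "Some z"] by (simp add: rf_regular_def rf_val_def phi_affine_def)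

lemma sigma_notin: "p \<notin> {a, b} \<Longrightarrow> sigma p \<notin> {a, b}"
  unfolding sigma_def by (intro psi_notin cnj2_in_curveC phi_in_curve)

lemma sigma_sigma: "p \<notin> {a, b} \<Longrightarrow> sigma (sigma p) = p"
  unfolding sigma_def by (simp add: phi_psi cnj2_in_curveC phi_in_curve psi_phi)

lemma inv_into_phi: "c \<in> curveC F \<Longrightarrow> inv_into (UNIV - {a, b}) \<phi> c = psi c"
proof -
  assume c: "c \<in> curveC F"
  have "inj_on \<phi> (UNIV - {a, b})" by (rule inj_on_inverseI[of _ psi]) (auto simp: psi_phi)
  then show ?thesis by (rule inv_into_f_eq) (use c psi_notin phi_psi in auto)
qed

lemma eventually_P1_at_notin: "eventually (\<lambda>z. Some z \<notin> {a, b}) (P1_at p)"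
  using eventually_P1_at_neq[of a p] eventually_P1_at_neq[of b p] by (auto elim: eventually_elim2)

text \<open>\<open>\<psi>\<close> maps the compact part of the curve in \<open>cball 0 M\<close> to a compact set of the sphere that
  avoids \<open>a\<close> and \<open>b\<close>.\<close>
lemma norm_phi_large_near:
  assumes "p \<in> {a, b}"
  shows "eventually (\<lambda>z. norm (\<phi> (Some z)) > M) (P1_at p)"
proof -
  define K where "K = curveC F \<inter> cball 0 M"
  define L where "L = (\<lambda>c. P1_sphere (psi c)) ` K"
  have "compact L"
    unfolding L_def K_def
    by (intro compact_continuous_image continuous_on_subset[OF continuous_on_P1_sphere_psi]
              closed_Int_compact closed_curveC compact_cball) auto
  moreover have "P1_sphere p \<notin> L"
    using assms psi_notin inj_P1_sphere by (auto simp: L_def K_def dest: injD)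
  ultimately obtain d where d: "d > 0" "\<forall>s\<in>L. d \<le> dist (P1_sphere p) s"
    using separate_point_closed[OF compact_imp_closed] by blast
  show ?thesis using tendstoD[OF tendsto_P1_sphere_P1_at d(1)] eventually_P1_at_notin[of p]
  proof eventually_elim
    case (elim z)
    have "\<phi> (Some z) \<notin> K"
    proof
      assume "\<phi> (Some z) \<in> K"
      then have "P1_sphere (Some z) \<in> L" using psi_phi[OF elim(2)] by (force simp: L_def)
      then show False using d(2) elim(1) by (auto simp: dist_commute)
    qed
    then show ?case using phi_in_curve[OF elim(2)] by (auto simp: K_def)
  qed
qed

lemma phi_affine_convergent:
  assumes p: "p \<notin> {a, b}"
  shows "\<exists>L. (phi_affine \<longlongrightarrow> L) (P1_at p)"
proof (cases p)
  case (Some w)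
  have "isCont phi_affine w"
    using phi_Some[of w] p Some unfolding phi_affine_def by (intro continuous_intros) auto
  then have "(phi_affine \<longlongrightarrow> phi_affine w) (P1_at p)" using Some by (simp add: P1_at_def isCont_def)
  then show ?thesis ..
next
  case None
  have "degree (fst r1) \<le> degree (snd r1)" "degree (fst r2) \<le> degree (snd r2)"
    using phi_rational[of None] p None by (auto simp: rf_regular_def)
  then obtain L1 L2 where
    "((\<lambda>z. poly (fst r1) z / poly (snd r1) z) \<longlongrightarrow> L1) at_infinity"
    "((\<lambda>z. poly (fst r2) z / poly (snd r2) z) \<longlongrightarrow> L2) at_infinity"
    using rational_function_convergent_at_infinity denominators_nonzero by metis
  then have "(phi_affine \<longlongrightarrow> (L1, L2)) (P1_at p)"
    unfolding phi_affine_def None P1_at_def option.case by (rule tendsto_Pair)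
  then show ?thesis ..
qed

lemma phi_locally_bounded:
  assumes p: "p \<notin> {a, b}"
  shows "\<exists>d>0. \<exists>C. \<forall>q. q \<notin> {a, b} \<and> dist (P1_sphere q) (P1_sphere p) < d \<longrightarrow> norm (\<phi> q) \<le> C"
proof -
  obtain L where "(phi_affine \<longlongrightarrow> L) (P1_at p)" using phi_affine_convergent[OF p] by blast
  from tendstoD[OF this zero_less_one]
  have "eventually (\<lambda>z. Some z \<notin> {a, b} \<longrightarrow> norm (\<phi> (Some z)) \<le> norm L + 1) (P1_at p)"
  proof (rule eventually_mono, intro impI)
    fix z assume "dist (phi_affine z) L < 1" "Some z \<notin> {a, b}"
    then show "norm (\<phi> (Some z)) \<le> norm L + 1"
      using phi_Some norm_triangle_ineq2[of "phi_affine z" L] by (simp add: dist_norm)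
  qed
  then obtain d where d: "d > 0" "\<And>q. dist (P1_sphere q) (P1_sphere p) < d \<Longrightarrow> q \<noteq> p \<Longrightarrow>
      \<exists>z. q = Some z \<and> (Some z \<notin> {a, b} \<longrightarrow> norm (\<phi> (Some z)) \<le> norm L + 1)"
    using eventually_P1_at_sphere_nbhd by blast
  have "norm (\<phi> q) \<le> max (norm L + 1) (norm (\<phi> p))"
    if "q \<notin> {a, b}" "dist (P1_sphere q) (P1_sphere p) < d" for q
    using d(2)[OF that(2)] that(1) by (cases "q = p") auto
  then show ?thesis using d(1) by blast
qed

text \<open>Cover the compact part of the sphere away from \<open>a\<close> and \<open>b\<close> by finitely many balls on which
  \<open>\<phi>\<close> is bounded.\<close>
lemma psi_near_ab_if_large:
  assumes e: "e > 0"
  shows "\<exists>M. \<forall>c\<in>curveC F. norm c > M \<longrightarrow>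
           dist (P1_sphere (psi c)) (P1_sphere a) < e \<or> dist (P1_sphere (psi c)) (P1_sphere b) < e"
proof -
  define E where "E = range P1_sphere \<inter> {s. e \<le> dist s (P1_sphere a)} \<inter> {s. e \<le> dist s (P1_sphere b)}"
  have "compact E" unfolding E_def Int_assoc
    by (intro compact_Int_closed compact_range_P1_sphere closed_Int closed_Collect_le continuous_intros)
  have "\<forall>s\<in>E. \<exists>dC. fst dC > 0 \<and>
          (\<forall>q. q \<notin> {a, b} \<and> dist (P1_sphere q) s < fst dC \<longrightarrow> norm (\<phi> q) \<le> snd dC)"
  proof
    fix s assume s: "s \<in> E"
    then obtain p where sp: "s = P1_sphere p" by (auto simp: E_def)
    have "p \<notin> {a, b}" using s sp e by (auto simp: E_def)
    from phi_locally_bounded[OF this] sp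
    show "\<exists>dC. fst dC > 0 \<and> (\<forall>q. q \<notin> {a, b} \<and> dist (P1_sphere q) s < fst dC \<longrightarrow> norm (\<phi> q) \<le> snd dC)"
      by force
  qed
  then obtain dC where dC: "\<And>s. s \<in> E \<Longrightarrow> fst (dC s) > 0"
      "\<And>s q. s \<in> E \<Longrightarrow> q \<notin> {a, b} \<Longrightarrow> dist (P1_sphere q) s < fst (dC s) \<Longrightarrow> norm (\<phi> q) \<le> snd (dC s)"
    by metis
  have cover: "E \<subseteq> \<Union> ((\<lambda>s. ball s (fst (dC s))) ` E)" using dC(1) by force
  obtain T where T: "T \<subseteq> E" "finite T" "E \<subseteq> \<Union> ((\<lambda>s. ball s (fst (dC s))) ` T)"
    using compactE_image[OF \<open>compact E\<close> _ cover] by blast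
  define M where "M = Max (insert 0 ((\<lambda>s. snd (dC s)) ` T))"
  show ?thesis
  proof (intro exI[of _ M] ballI impI)
    fix c assume c: "c \<in> curveC F" "norm c > M"
    show "dist (P1_sphere (psi c)) (P1_sphere a) < e \<or> dist (P1_sphere (psi c)) (P1_sphere b) < e"
    proof (rule ccontr)
      assume "\<not> ?thesis"
      then have "P1_sphere (psi c) \<in> E" by (auto simp: E_def dist_commute)
      then obtain t where t: "t \<in> T" "dist (P1_sphere (psi c)) t < fst (dC t)"
        using T(3) by (auto simp: dist_commute)
      have "norm c = norm (\<phi> (psi c))" using phi_psi[OF c(1)] by simp
      also have "\<dots> \<le> snd (dC t)" using dC(2) t T(1) psi_notin[OF c(1)] by blast
      also have "\<dots> \<le> M" unfolding M_def using t(1) T(2) by (intro Max_ge) auto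
      finally show False using c(2) by simp
    qed
  qed
qed

lemma sigma_near_ab:
  assumes "e > 0" "p \<in> {a, b}"
  shows "eventually (\<lambda>z. dist (sigma_sphere z) (P1_sphere a) < e \<or> dist (sigma_sphere z) (P1_sphere b) < e)
           (P1_at p)"
proof -
  obtain M where M: "\<forall>c\<in>curveC F. norm c > M \<longrightarrow>
      dist (P1_sphere (psi c)) (P1_sphere a) < e \<or> dist (P1_sphere (psi c)) (P1_sphere b) < e"
    using psi_near_ab_if_large[OF assms(1)] by blast
  show ?thesis using norm_phi_large_near[OF assms(2), of M] eventually_P1_at_notin[of p]
    by eventually_elim (use M cnj2_in_curveC phi_in_curve in \<open>simp add: sigma_def\<close>)
qed

lemma continuous_on_sigma_sphere: "continuous_on {z. Some z \<notin> {a, b}} sigma_sphere"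
proof -
  let ?U = "{z. Some z \<notin> {a, b}}"
  have "continuous_on ?U phi_affine"
    unfolding phi_affine_def using phi_Some by (intro continuous_intros) auto
  then have cont: "continuous_on ?U (\<lambda>z. cnj2 (phi_affine z))" unfolding cnj2_def by (intro continuous_intros)
  have in_curve: "cnj2 (phi_affine z) \<in> curveC F" if "z \<in> ?U" for z
    using that phi_Some[of z] cnj2_in_curveC[OF phi_in_curve[of "Some z"]] by simp
  have "continuous_on ?U (\<lambda>z. P1_sphere (psi (cnj2 (phi_affine z))))"
    using continuous_on_compose2[OF continuous_on_P1_sphere_psi cont] in_curve by blast
  then show ?thesis by (rule continuous_on_eq) (simp add: sigma_def phi_Some)
qed

lemma sigma_tendsto_a_or_b:
  assumes "p \<in> {a, b}"
  shows "(sigma_sphere \<longlongrightarrow> P1_sphere a) (P1_at p) \<or> (sigma_sphere \<longlongrightarrow> P1_sphere b) (P1_at p)"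
proof (rule tendsto_one_of_two_points)
  show "P1_sphere a \<noteq> P1_sphere b" using a_neq_b inj_P1_sphere by (auto dest: injD)
  show "continuous_on {z. Some z \<notin> {a, b}} sigma_sphere" by (rule continuous_on_sigma_sphere)
  show "eventually (\<lambda>z. z \<in> {z. Some z \<notin> {a, b}}) (P1_at p)" using eventually_P1_at_notin by simp
qed (use sigma_near_ab[OF _ assms] eventually_P1_at_connected in blast)+

lemma sigma_swap:
  assumes "p \<in> {a, b}" "q \<in> {a, b}" "p \<noteq> q"
    and lim: "(sigma_sphere \<longlongrightarrow> P1_sphere q) (P1_at p)"
  shows "(sigma_sphere \<longlongrightarrow> P1_sphere p) (P1_at q)"
proof -
  have "\<not> (sigma_sphere \<longlongrightarrow> P1_sphere q) (P1_at q)"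
  proof
    assume self: "(sigma_sphere \<longlongrightarrow> P1_sphere q) (P1_at q)"
    define eta where "eta = dist (P1_sphere p) (P1_sphere q) / 2"
    have eta: "eta > 0" using assms(3) inj_P1_sphere by (auto simp: eta_def dest: injD)
    obtain d where d: "d > 0" "\<And>r. dist (P1_sphere r) (P1_sphere q) < d \<Longrightarrow> r \<noteq> q \<Longrightarrow>
        \<exists>w. r = Some w \<and> dist (sigma_sphere w) (P1_sphere q) < eta"
      using eventually_P1_at_sphere_nbhd[OF tendstoD[OF self eta]] by blast
    text \<open>Near \<open>p\<close>, \<open>\<sigma>\<close> lands near \<open>q\<close>, where \<open>\<sigma>\<close> stays near \<open>q\<close>; so the involution \<open>\<sigma>\<close>
      applied twice would land near \<open>q\<close>, whereas it returns to the starting point near \<open>p\<close>.\<close>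
    have "eventually (\<lambda>z. False) (P1_at p)"
      using tendstoD[OF lim d(1)] eventually_P1_at_notin[of p] tendstoD[OF tendsto_P1_sphere_P1_at eta]
    proof eventually_elim
      case (elim z)
      have "sigma (Some z) \<noteq> q" using sigma_notin[OF elim(2)] assms(2) by auto
      then obtain w where w: "sigma (Some z) = Some w" "dist (sigma_sphere w) (P1_sphere q) < eta"
        using d(2) elim(1) by blast
      have "sigma (Some w) = Some z" using sigma_sigma[OF elim(2)] w(1) by simp
      then have "dist (P1_sphere (Some z)) (P1_sphere q) < eta" using w(2) by simp
      then show False
        using elim(3) dist_triangle[of "P1_sphere p" "P1_sphere q" "P1_sphere (Some z)"]
        by (simp add: eta_def dist_commute)
    qed
    then show False using P1_at_neq_bot by (simp add: eventually_False)
  qed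
  then show ?thesis using sigma_tendsto_a_or_b[OF assms(2)] assms by auto
qed

lemma real_points_away_from:
  assumes "p \<in> {a, b}" "p \<noteq> q" and lim: "(sigma_sphere \<longlongrightarrow> P1_sphere q) (P1_at p)"
  obtains d where "d > 0"
    "\<And>c. c \<in> curveC F \<Longrightarrow> cnj2 c = c \<Longrightarrow> d \<le> dist (P1_sphere (psi c)) (P1_sphere p)"
proof -
  define eta where "eta = dist (P1_sphere p) (P1_sphere q) / 2"
  have eta: "eta > 0" using assms(2) inj_P1_sphere by (auto simp: eta_def dest: injD)
  obtain d where d: "d > 0" "\<And>r. dist (P1_sphere r) (P1_sphere p) < d \<Longrightarrow> r \<noteq> p \<Longrightarrow>
      \<exists>z. r = Some z \<and> dist (sigma_sphere z) (P1_sphere q) < eta"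
    using eventually_P1_at_sphere_nbhd[OF tendstoD[OF lim eta]] by blast
  show ?thesis
  proof (rule that[of "min d eta"])
    fix c assume c: "c \<in> curveC F" "cnj2 c = c"
    show "min d eta \<le> dist (P1_sphere (psi c)) (P1_sphere p)"
    proof (rule ccontr)
      assume close: "\<not> ?thesis"
      have "psi c \<noteq> p" using psi_notin[OF c(1)] assms(1) by auto
      then obtain z where z: "psi c = Some z" "dist (sigma_sphere z) (P1_sphere q) < eta"
        using d(2) close by force
      have "sigma (Some z) = Some z" using z(1) phi_psi[OF c(1)] c(2) by (simp add: sigma_def)
      then show False
        using z close dist_triangle[of "P1_sphere p" "P1_sphere q" "P1_sphere (Some z)"]
        by (simp add: eta_def dist_commute)
    qed
  qed (use d(1) eta in simp)
qed

lemma real_zeros_bounded_if_swap: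
  assumes "(sigma_sphere \<longlongrightarrow> P1_sphere b) (P1_at a)" "(sigma_sphere \<longlongrightarrow> P1_sphere a) (P1_at b)"
  shows "bounded {v :: real \<times> real. evalF F (fst v) (snd v) = 0}"
proof -
  obtain da where da: "da > 0"
    "\<And>c. c \<in> curveC F \<Longrightarrow> cnj2 c = c \<Longrightarrow> da \<le> dist (P1_sphere (psi c)) (P1_sphere a)"
    using real_points_away_from[OF _ a_neq_b assms(1)] by blast
  obtain db where db: "db > 0"
    "\<And>c. c \<in> curveC F \<Longrightarrow> cnj2 c = c \<Longrightarrow> db \<le> dist (P1_sphere (psi c)) (P1_sphere b)"
    using real_points_away_from[OF _ a_neq_b[symmetric] assms(2)] by blast
  obtain M where M: "\<forall>c\<in>curveC F. norm c > M \<longrightarrow>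
      dist (P1_sphere (psi c)) (P1_sphere a) < min da db \<or> dist (P1_sphere (psi c)) (P1_sphere b) < min da db"
    using psi_near_ab_if_large[of "min da db"] da db by auto
  have "norm v \<le> M" if "evalF F (fst v) (snd v) = 0" for v :: "real \<times> real"
  proof -
    define c where "c = (complex_of_real (fst v), complex_of_real (snd v))"
    have c: "c \<in> curveC F" "cnj2 c = c" "norm c = norm v"
      using that of_real_evalF[of F "fst v" "snd v"]
      by (simp_all add: c_def curveC_def cnj2_def norm_Pair norm_prod_def)
    show ?thesis
    proof (rule ccontr)
      assume "\<not> norm v \<le> M"
      then have "dist (P1_sphere (psi c)) (P1_sphere a) < min da db \<or>
                 dist (P1_sphere (psi c)) (P1_sphere b) < min da db"
        using M c by auto
      then show False using da(2)[OF c(1,2)] db(2)[OF c(1,2)] by auto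
    qed
  qed
  then show ?thesis unfolding bounded_iff by (intro exI[of _ M]) blast
qed

lemma sigma_tendsto_self:
  assumes surj: "surj (\<lambda>v :: real \<times> real. evalF F (fst v) (snd v))" and p: "p \<in> {a, b}"
  shows "(sigma_sphere \<longlongrightarrow> P1_sphere p) (P1_at p)"
proof (rule ccontr)
  assume not_fixed: "\<not> ?thesis"
  obtain q where q: "q \<in> {a, b}" "q \<noteq> p" "{p, q} = {a, b}" using p a_neq_b by blast
  have "(sigma_sphere \<longlongrightarrow> P1_sphere q) (P1_at p)"
    using sigma_tendsto_a_or_b[OF p] not_fixed q p by auto
  moreover from sigma_swap[OF p q(1) q(2)[symmetric] this]
  have "(sigma_sphere \<longlongrightarrow> P1_sphere p) (P1_at q)" .
  ultimately have "bounded {v :: real \<times> real. evalF F (fst v) (snd v) = 0}"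
    using real_zeros_bounded_if_swap q(3) by (auto simp: doubleton_eq_iff)
  moreover have "\<not> bounded {v :: real \<times> real. evalF F (fst v) (snd v) = 0}"
    by (rule zero_set_unbounded_if_surj) (simp_all add: surj continuous_intros)
  ultimately show False by contradiction
qed

lemma real_place_ab:
  assumes "surj (\<lambda>v :: real \<times> real. evalF F (fst v) (snd v))" "p \<in> {a, b}"
  shows "real_place a b \<phi> p"
proof -
  have "eventually (\<lambda>z. sigma_sphere z = P1_sphere (inv_into (UNIV - {a, b}) \<phi> (cnj2 (\<phi> (Some z)))))
          (P1_at p)"
    using eventually_P1_at_notin[of p]
    by (rule eventually_mono) (simp add: inv_into_phi sigma_def cnj2_in_curveC phi_in_curve)
  with sigma_tendsto_self[OF assms]
  have "((\<lambda>z. P1_sphere (inv_into (UNIV - {a, b}) \<phi> (cnj2 (\<phi> (Some z))))) \<longlongrightarrow> P1_sphere p) (P1_at p)"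
    by (rule Lim_transform_eventually)
  then show ?thesis unfolding real_place_def by (rule P1_tendsto_if_sphere_tendsto)
qed

end

lemma P1_curve_iso_if_is_iso_P1:
  assumes "is_iso_P1 a b F \<phi>"
  obtains r1 r2 g0 g1 where "P1_curve_iso F a b \<phi> r1 r2 g0 g1"
proof -
  from assms obtain r1 r2 g0 g1 where iso: "a \<noteq> b" "rf_ok r1" "rf_ok r2"
    "\<forall>p \<in> UNIV - {a, b}. rf_regular r1 p \<and> rf_regular r2 p \<and> \<phi> p = (rf_val r1 p, rf_val r2 p)"
    "\<phi> ` (UNIV - {a, b}) \<subseteq> curveC F"
    "\<forall>(x, y) \<in> curveC F. (evalC g0 x y \<noteq> 0 \<or> evalC g1 x y \<noteq> 0) \<and>
       proj (evalC g0 x y) (evalC g1 x y) \<in> UNIV - {a, b} \<and>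
       \<phi> (proj (evalC g0 x y) (evalC g1 x y)) = (x, y)"
    "\<forall>p \<in> UNIV - {a, b}.
       proj (evalC g0 (fst (\<phi> p)) (snd (\<phi> p))) (evalC g1 (fst (\<phi> p)) (snd (\<phi> p))) = p"
    unfolding is_iso_P1_def by blast
  show ?thesis
  proof (rule that, unfold_locales)
    show "snd r1 \<noteq> 0" "snd r2 \<noteq> 0" using iso(2,3) by (simp_all add: rf_ok_def)
  qed (use iso(1,4-) in blast)+
qed

theorem mainTheorem13:
  fixes F :: "rat poly poly" and a b :: P1 and \<phi> :: "P1 \<Rightarrow> complex \<times> complex"
  assumes surjR: "\<forall>r::real. \<exists>x y::real. evalF F x y = r"
    and natZ: "\<forall>n::nat. \<exists>x y::int. evalF F (real_of_int x) (real_of_int y) = real n"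
    and smooth: "smooth_curve F"
    and Gm: "iso_to_Gm F"
    and iso: "is_iso_P1 a b F \<phi>"
  shows "real_place a b \<phi> a \<and> real_place a b \<phi> b"
  \<comment> \<open>only \<open>surjR\<close> and \<open>iso\<close> are needed\<close>
proof -
  obtain r1 r2 g0 g1 where "P1_curve_iso F a b \<phi> r1 r2 g0 g1"
    using P1_curve_iso_if_is_iso_P1[OF iso] .
  then interpret P1_curve_iso F a b \<phi> r1 r2 g0 g1 .
  have "surj (\<lambda>v :: real \<times> real. evalF F (fst v) (snd v))"
    unfolding surj_def
  proof
    fix r :: real
    obtain x y where "evalF F x y = r" using surjR by blast
    then show "\<exists>v. r = evalF F (fst v) (snd v)" by (intro exI[of _ "(x, y)"]) simp
  qed
  then show ?thesis using real_place_ab by blast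
qed

end
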